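(* Let $\mathcal G=(\mathcal V,\mathcal E,W)$ be a network, $h\in\mathbb{R}^{\mathcal V}$, and consider the SNC game with binary actions on $\mathcal G$ with external field $h$. Let $\mathcal V=\mathcal R\cup\mathcal S$, $\mathcal R\cap\mathcal S=\emptyset$, be a binary partition such that $\mathcal G_{\mathcal R}$ is structurally balanced and $\mathcal G_{\mathcal S}$ is undirected, and let $\tau\in\{\pm1\}^{\mathcal R}$ be such that $\mathcal G_{\mathcal R}^{[\tau]}$ is unsigned. Let $h^-,h^+\in\mathbb{R}^{\mathcal R}$ be given by $h_i^+=\tau_ih_i+w_i^{\mathcal S}$ and $h_i^-=\tau_ih_i-w_i^{\mathcal S}$ for $i\in\mathcal R$. If $\mathcal G_{\mathcal R}$ is $(h^-,h^+)$-indecomposable and $w_i^{\mathcal R}-|h_i|>w_i^{\mathcal S}$ for all $i\in\mathcal R$, then there exists a globally BR-stable subset of the set of Nash equilibria of the game.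
   Context: A network is a triple $\mathcal G=(\mathcal V,\mathcal E,W)$ where $\mathcal V$ is a finite nonempty set, $\mathcal E\subseteq\mathcal V\times\mathcal V$, and $W\in\mathbb{R}^{\mathcal V\times\mathcal V}$ has zero diagonal and satisfies $W_{ij}\neq0$ iff $(i,j)\in\mathcal E$ (weights may have either sign). It is unsigned if $W\ge0$ entrywise and undirected if its weight matrix is symmetric. For $\mathcal U\subseteq\mathcal V$, the subnetwork $\mathcal G_{\mathcal U}$ has node set $\mathcal U$, links $\mathcal E\cap(\mathcal U\times\mathcal U)$ and weight matrix $W_{\mathcal U\mathcal U}$. A network is structurally balanced if its node set can be written as a disjoint union of two sets with nonnegative weights on links within each set and nonpositive weights on links between the two sets. For $\tau\in\{\pm1\}^{\mathcal R}$, $\mathcal G_{\mathcal R}^{[\tau]}$ is the network with the same nodes and links as $\mathcal G_{\mathcal R}$ and weight matrix $[\tau]W_{\mathcal R\mathcal R}[\tau]$, where $[\tau]$ is the diagonal matrix with diagonal $\tau$. For $i\in\mathcal V$ and $\mathcal B\subseteq\mathcal V$, $w_i^{\mathcal B}=\sum_{j\in\mathcal B}|W_{ij}|$. Indecomposability: a network with node set $\mathcal U$ and $h^-\le h^+$ in $\mathbb{R}^{\mathcal U}$ is $(h^-,h^+)$-indecomposable if for every partition $\mathcal U=\mathcal U^-\cup\mathcal U^+$ into two disjoint nonempty sets there is a node $i$ with either $i\in\mathcal U^+$ and $w_i^{\mathcal U^+}+h_i^+<w_i^{\mathcal U^-}$, or $i\in\mathcal U^-$ and $w_i^{\mathcal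 U^-}-h_i^-<w_i^{\mathcal U^+}$. The SNC game with binary actions on $\mathcal G$ with external field $h\in\mathbb{R}^{\mathcal V}$ has player set $\mathcal V$, action set $\{-1,+1\}$ for each player, strategy profiles $\mathcal X=\{\pm1\}^{\mathcal V}$, and utilities $u_i(x)=h_ix_i+x_i\sum_{j\in\mathcal V}W_{ij}x_j$. Best responses $\mathcal B_i(x_{-i})=\arg\max_{x_i\in\{\pm1\}}u_i(x_i,x_{-i})$; Nash equilibrium: $x^*_i\in\mathcal B_i(x^*_{-i})$ for all $i$. A BR-path of length $l\ge0$ from $x$ to $y$ is a sequence $x^{(0)}=x,\dots,x^{(l)}=y$ such that for each $k$ some player $i_k$ has $x^{(k)}_{-i_k}=x^{(k-1)}_{-i_k}$ and $x^{(k)}_{i_k}\in\mathcal B_{i_k}(x^{(k-1)}_{-i_k})\setminus\{x^{(k-1)}_{i_k}\}$. A set $\mathcal X^*\subseteq\mathcal X$ is globally BR-reachable if from every profile there is a BR-path to some element of $\mathcal X^*$; BR-invariant if there is no BR-path from an element of $\mathcal X^*$ to an element outside; globally BR-stable if both. *)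

theory Defs
  imports Complex_Main
begin

text \<open>A network on node set V with weight matrix W (edges are the pairs with nonzero
weight, so they are determined by W).\<close>
definition network :: "'v set \<Rightarrow> ('v \<Rightarrow> 'v \<Rightarrow> real) \<Rightarrow> bool" where
  "network V W \<longleftrightarrow> finite V \<and> V \<noteq> {} \<and> (\<forall>i\<in>V. W i i = 0)"

definition wsum :: "('v \<Rightarrow> 'v \<Rightarrow> real) \<Rightarrow> 'v \<Rightarrow> 'v set \<Rightarrow> real" where
  "wsum W i B = (\<Sum>j\<in>B. \<bar>W i j\<bar>)"

definition structurally_balanced :: "'v set \<Rightarrow> ('v \<Rightarrow> 'v \<Rightarrow> real) \<Rightarrow> bool" where
  "structurally_balanced U W \<longleftrightarrow>
     (\<exists>A B. A \<union> B = U \<and> A \<inter> B = {} \<and>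
        (\<forall>i\<in>U. \<forall>j\<in>U. ((i \<in> A \<longleftrightarrow> j \<in> A) \<longrightarrow> W i j \<ge> 0) \<and>
                      ((i \<in> A \<longleftrightarrow> j \<notin> A) \<longrightarrow> W i j \<le> 0)))"

definition undirected_on :: "'v set \<Rightarrow> ('v \<Rightarrow> 'v \<Rightarrow> real) \<Rightarrow> bool" where
  "undirected_on U W \<longleftrightarrow> (\<forall>i\<in>U. \<forall>j\<in>U. W i j = W j i)"

definition gauge_unsigned :: "'v set \<Rightarrow> ('v \<Rightarrow> 'v \<Rightarrow> real) \<Rightarrow> ('v \<Rightarrow> real) \<Rightarrow> bool" where
  "gauge_unsigned U W tau \<longleftrightarrow> (\<forall>i\<in>U. \<forall>j\<in>U. tau i * W i j * tau j \<ge> 0)"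

definition indecomposable ::
  "'v set \<Rightarrow> ('v \<Rightarrow> 'v \<Rightarrow> real) \<Rightarrow> ('v \<Rightarrow> real) \<Rightarrow> ('v \<Rightarrow> real) \<Rightarrow> bool" where
  "indecomposable U W hm hp \<longleftrightarrow>
     (\<forall>Um Up. Um \<union> Up = U \<and> Um \<inter> Up = {} \<and> Um \<noteq> {} \<and> Up \<noteq> {} \<longrightarrow>
        (\<exists>i. (i \<in> Up \<and> wsum W i Up + hp i < wsum W i Um) \<or>
             (i \<in> Um \<and> wsum W i Um - hm i < wsum W i Up)))"

definition profiles :: "'v set \<Rightarrow> ('v \<Rightarrow> real) set" where
  "profiles V = {x. (\<forall>i\<in>V. x i = -1 \<or> x i = 1) \<and> (\<forall>i. i \<notin> V \<longrightarrow> x i = 0)}"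

definition utility :: "'v set \<Rightarrow> ('v \<Rightarrow> 'v \<Rightarrow> real) \<Rightarrow> ('v \<Rightarrow> real) \<Rightarrow> 'v \<Rightarrow> ('v \<Rightarrow> real) \<Rightarrow> real" where
  "utility V W h i x = h i * x i + x i * (\<Sum>j\<in>V. W i j * x j)"

definition best_resp :: "'v set \<Rightarrow> ('v \<Rightarrow> 'v \<Rightarrow> real) \<Rightarrow> ('v \<Rightarrow> real) \<Rightarrow> 'v \<Rightarrow> ('v \<Rightarrow> real) \<Rightarrow> real set" where
  "best_resp V W h i x = {a \<in> {-1, 1}. \<forall>b\<in>{-1, 1}.
      utility V W h i (x(i := b)) \<le> utility V W h i (x(i := a))}"

definition nash :: "'v set \<Rightarrow> ('v \<Rightarrow> 'v \<Rightarrow> real) \<Rightarrow> ('v \<Rightarrow> real) \<Rightarrow> ('v \<Rightarrow> real) set" where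
  "nash V W h = {x \<in> profiles V. \<forall>i\<in>V. x i \<in> best_resp V W h i x}"

definition br_step :: "'v set \<Rightarrow> ('v \<Rightarrow> 'v \<Rightarrow> real) \<Rightarrow> ('v \<Rightarrow> real) \<Rightarrow> ('v \<Rightarrow> real) \<Rightarrow> ('v \<Rightarrow> real) \<Rightarrow> bool" where
  "br_step V W h x y \<longleftrightarrow> (\<exists>i\<in>V. y = x(i := y i) \<and> y i \<in> best_resp V W h i x \<and> y i \<noteq> x i)"

definition br_path :: "'v set \<Rightarrow> ('v \<Rightarrow> 'v \<Rightarrow> real) \<Rightarrow> ('v \<Rightarrow> real) \<Rightarrow> ('v \<Rightarrow> real) \<Rightarrow> ('v \<Rightarrow> real) \<Rightarrow> bool" where
  "br_path V W h = (br_step V W h)\<^sup>*\<^sup>*"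

definition globally_BR_reachable :: "'v set \<Rightarrow> ('v \<Rightarrow> 'v \<Rightarrow> real) \<Rightarrow> ('v \<Rightarrow> real) \<Rightarrow> ('v \<Rightarrow> real) set \<Rightarrow> bool" where
  "globally_BR_reachable V W h X \<longleftrightarrow> (\<forall>x\<in>profiles V. \<exists>y\<in>X. br_path V W h x y)"

definition BR_invariant :: "'v set \<Rightarrow> ('v \<Rightarrow> 'v \<Rightarrow> real) \<Rightarrow> ('v \<Rightarrow> real) \<Rightarrow> ('v \<Rightarrow> real) set \<Rightarrow> bool" where
  "BR_invariant V W h X \<longleftrightarrow> (\<forall>x\<in>X. \<forall>y. br_path V W h x y \<longrightarrow> y \<in> X)"

definition globally_BR_stable :: "'v set \<Rightarrow> ('v \<Rightarrow> 'v \<Rightarrow> real) \<Rightarrow> ('v \<Rightarrow> real) \<Rightarrow> ('v \<Rightarrow> real) set \<Rightarrow> bool" where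
  "globally_BR_stable V W h X \<longleftrightarrow> globally_BR_reachable V W h X \<and> BR_invariant V W h X"

end

theory Submission
  imports Defs
begin

(* Conjugating by the gauge \<tau>, the dynamics on R only sees the set A of nodes of R whose
   action agrees with \<tau>: whatever S plays, a node of A may leave it when w^A + h^+ < w^(R-A),
   and a node outside A may join it when w^(R-A) - h^- < w^A. Flipping greedily out of A and,
   once no node wants to leave, into A, indecomposability drives A to the empty set or to R.
   At such a consensus the margin w^R - |h| > w^S locks every node of R, so afterwards only S
   moves, and on S the symmetric weights give an exact potential. A potential maximiser among
   the profiles reachable from the consensus is absorbing: every best-response path from it
   stays among Nash equilibria. The absorbing profiles form a globally BR-stable set. *)

definition local_field :: "'v set \<Rightarrow> ('v \<Rightarrow> 'v \<Rightarrow> real) \<Rightarrow> ('v \<Rightarrow> real) \<Rightarrow> ('v \<Rightarrow> real) \<Rightarrow> 'v \<Rightarrow> real" where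
  "local_field V W h x i = h i + (\<Sum>j\<in>V. W i j * x j)"

lemma local_field_fun_upd_self:
  assumes "W i i = 0"
  shows "local_field V W h (x(i := b)) i = local_field V W h x i"
  unfolding local_field_def using assms by (auto intro!: sum.cong)

lemma utility_fun_upd_self:
  assumes "W i i = 0"
  shows "utility V W h i (x(i := b)) = b * local_field V W h x i"
proof -
  have "utility V W h i (x(i := b)) = b * local_field V W h (x(i := b)) i"
    unfolding utility_def local_field_def by (simp add: algebra_simps)
  then show ?thesis
    using local_field_fun_upd_self[of W i, OF assms] by simp
qed

lemma best_resp_iff:
  assumes "W i i = 0"
  shows "a \<in> best_resp V W h i x \<longleftrightarrow> a \<in> {-1, 1} \<and> a * local_field V W h x i \<ge> 0"
  unfolding best_resp_def utility_fun_upd_self[of W i, OF assms] by auto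

lemma profiles_value: "x \<in> profiles V \<Longrightarrow> i \<in> V \<Longrightarrow> x i = -1 \<or> x i = 1"
  unfolding profiles_def by auto

lemma profiles_flip: "x \<in> profiles V \<Longrightarrow> i \<in> V \<Longrightarrow> x(i := - x i) \<in> profiles V"
  unfolding profiles_def by auto

lemma finite_profiles:
  assumes "finite V"
  shows "finite (profiles V)"
proof (rule finite_subset)
  show "profiles V \<subseteq> {x. \<forall>i. (i \<in> V \<longrightarrow> x i \<in> {-1, 1}) \<and> (i \<notin> V \<longrightarrow> x i = 0)}"
    unfolding profiles_def by auto
  show "finite {x. \<forall>i. (i \<in> V \<longrightarrow> x i \<in> {-1, 1::real}) \<and> (i \<notin> V \<longrightarrow> x i = 0)}"
    using assms by (rule finite_set_of_finite_funs) simp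
qed

lemma br_step_iff:
  assumes "network V W" and "x \<in> profiles V"
  shows "br_step V W h x y \<longleftrightarrow> (\<exists>i\<in>V. y = x(i := - x i) \<and> x i * local_field V W h x i \<le> 0)"
proof -
  have flip: "a \<in> best_resp V W h i x \<and> a \<noteq> x i \<longleftrightarrow> a = - x i \<and> x i * local_field V W h x i \<le> 0"
    if "i \<in> V" for i a
  proof -
    have "W i i = 0" using assms(1) that unfolding network_def by blast
    then show ?thesis
      using best_resp_iff[of W i a V h x] profiles_value[OF assms(2) that] by auto
  qed
  show ?thesis
  proof
    assume "br_step V W h x y"
    then obtain i where "i \<in> V" "y = x(i := y i)" "y i \<in> best_resp V W h i x" "y i \<noteq> x i"
      unfolding br_step_def by blast
    with flip show "\<exists>i\<in>V. y = x(i := - x i) \<and> x i * local_field V W h x i \<le> 0"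
      by metis
  next
    assume "\<exists>i\<in>V. y = x(i := - x i) \<and> x i * local_field V W h x i \<le> 0"
    then obtain i where "i \<in> V" "y = x(i := - x i)" "x i * local_field V W h x i \<le> 0"
      by blast
    with flip show "br_step V W h x y"
      unfolding br_step_def by auto
  qed
qed

lemma br_path_profiles:
  assumes "network V W" and "br_path V W h x y" and "x \<in> profiles V"
  shows "y \<in> profiles V"
  using assms(2,3) unfolding br_path_def
  by (induction rule: rtranclp_induct) (auto simp: br_step_iff[OF assms(1)] intro: profiles_flip)

lemma nash_iff:
  assumes "network V W"
  shows "x \<in> nash V W h \<longleftrightarrow> x \<in> profiles V \<and> (\<forall>i\<in>V. x i * local_field V W h x i \<ge> 0)"
proof -
  have "x i \<in> best_resp V W h i x \<longleftrightarrow> x i * local_field V W h x i \<ge> 0"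
    if "x \<in> profiles V" and "i \<in> V" for i
    using assms that best_resp_iff[of W i "x i" V h x] profiles_value[of x V i]
    unfolding network_def by auto
  then show ?thesis
    unfolding nash_def by auto
qed

lemma globally_BR_stable_if_absorbing_reachable:
  assumes "\<forall>x\<in>profiles V. \<exists>y. br_path V W h x y \<and> (\<forall>u. br_path V W h y u \<longrightarrow> u \<in> nash V W h)"
  shows "\<exists>X \<subseteq> nash V W h. globally_BR_stable V W h X"
proof (intro exI conjI)
  let ?X = "{y. \<forall>u. br_path V W h y u \<longrightarrow> u \<in> nash V W h}"
  show "?X \<subseteq> nash V W h"
    unfolding br_path_def by auto
  show "globally_BR_stable V W h ?X"
    using assms unfolding globally_BR_stable_def globally_BR_reachable_def BR_invariant_def br_path_def
    by (auto intro: rtranclp_trans)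
qed

lemma potential_reaches_absorbing:
  fixes f :: "'a \<Rightarrow> 'b::linorder"
  assumes finite: "finite {y. r\<^sup>*\<^sup>* x y}"
    and mono: "\<And>y z. r\<^sup>*\<^sup>* x y \<Longrightarrow> r y z \<Longrightarrow> f y \<le> f z"
    and improve: "\<And>y. r\<^sup>*\<^sup>* x y \<Longrightarrow> y \<notin> N \<Longrightarrow> \<exists>z. r y z \<and> f y < f z"
  shows "\<exists>y. r\<^sup>*\<^sup>* x y \<and> (\<forall>u. r\<^sup>*\<^sup>* y u \<longrightarrow> u \<in> N)"
proof -
  have mono_path: "f y \<le> f u" if "r\<^sup>*\<^sup>* x y" and "r\<^sup>*\<^sup>* y u" for y u
    using that(2,1)
    by (induction rule: rtranclp_induct) (auto intro: order_trans mono rtranclp_trans)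
  let ?F = "f ` {y. r\<^sup>*\<^sup>* x y}"
  have "Max ?F \<in> ?F"
    using finite by (intro Max_in) auto
  then obtain y where y: "r\<^sup>*\<^sup>* x y" and "f y = Max ?F"
    by auto
  then have y_max: "f z \<le> f y" if "r\<^sup>*\<^sup>* x z" for z
    using finite that by auto
  have "u \<in> N" if "r\<^sup>*\<^sup>* y u" for u
  proof (rule ccontr)
    assume "u \<notin> N"
    have xu: "r\<^sup>*\<^sup>* x u" using y that by (rule rtranclp_trans)
    then obtain z where "r u z" and "f u < f z"
      using improve \<open>u \<notin> N\<close> by blast
    moreover have "f y \<le> f u" using mono_path[OF y that] .
    moreover have "f z \<le> f y" using y_max xu \<open>r u z\<close> by (meson rtranclp.rtrancl_into_rtrancl)
    ultimately show False by simp
  qed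
  then show ?thesis using y by blast
qed

definition partial_potential :: "'v set \<Rightarrow> ('v \<Rightarrow> 'v \<Rightarrow> real) \<Rightarrow> ('v \<Rightarrow> real) \<Rightarrow> 'v set \<Rightarrow> ('v \<Rightarrow> real) \<Rightarrow> real" where
  "partial_potential V W h S x =
     (\<Sum>i\<in>S. x i * (h i + (\<Sum>j\<in>V - S. W i j * x j))) + (\<Sum>i\<in>S. \<Sum>j\<in>S. W i j * x i * x j) / 2"

lemma quadratic_form_fun_upd:
  fixes W :: "'v \<Rightarrow> 'v \<Rightarrow> real"
  assumes "finite S" and "k \<in> S" and "W k k = 0"
  shows "(\<Sum>i\<in>S. \<Sum>j\<in>S. W i j * (x(k := b)) i * (x(k := b)) j) =
         (\<Sum>i\<in>S. \<Sum>j\<in>S. W i j * x i * x j)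
         + (b - x k) * ((\<Sum>j\<in>S. W k j * x j) + (\<Sum>i\<in>S. W i k * x i))"
proof -
  let ?d = "b - x k"
  have "W i j * (x(k := b)) i * (x(k := b)) j = W i j * x i * x j
      + (if i = k then ?d * (W k j * x j) else 0) + (if j = k then ?d * (W i k * x i) else 0)" for i j
    using assms(3) by (cases "i = k"; cases "j = k") (auto simp: algebra_simps)
  then have "(\<Sum>i\<in>S. \<Sum>j\<in>S. W i j * (x(k := b)) i * (x(k := b)) j) =
      (\<Sum>i\<in>S. \<Sum>j\<in>S. W i j * x i * x j)
      + (\<Sum>i\<in>S. \<Sum>j\<in>S. if i = k then ?d * (W k j * x j) else 0)
      + (\<Sum>i\<in>S. \<Sum>j\<in>S. if j = k then ?d * (W i k * x i) else 0)"
    by (simp add: sum.distrib)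
  also have "(\<Sum>i\<in>S. \<Sum>j\<in>S. if i = k then ?d * (W k j * x j) else 0) = (\<Sum>j\<in>S. ?d * (W k j * x j))"
    using assms(1,2) by (subst sum.swap) simp
  also have "(\<Sum>i\<in>S. \<Sum>j\<in>S. if j = k then ?d * (W i k * x i) else 0) = (\<Sum>i\<in>S. ?d * (W i k * x i))"
    using assms(1,2) by simp
  finally show ?thesis
    by (simp add: sum_distrib_left distrib_left)
qed

lemma partial_potential_fun_upd:
  assumes "finite V" and "k \<in> S" and "S \<subseteq> V" and "undirected_on S W" and "W k k = 0"
  shows "partial_potential V W h S (x(k := b)) - partial_potential V W h S x
           = (b - x k) * local_field V W h x k"
proof -
  let ?c = "\<lambda>i. h i + (\<Sum>j\<in>V - S. W i j * x j)"
  have fin: "finite S" using assms(1,3) by (rule finite_subset[rotated])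
  have c_upd: "(\<Sum>j\<in>V - S. W i j * (x(k := b)) j) = (\<Sum>j\<in>V - S. W i j * x j)" for i
    using assms(2) by (intro sum.cong) auto
  have lin: "(\<Sum>i\<in>S. (x(k := b)) i * ?c i) = (\<Sum>i\<in>S. x i * ?c i) + (b - x k) * ?c k"
    using fin assms(2) by (simp add: sum.remove algebra_simps)
  have sym: "(\<Sum>i\<in>S. W i k * x i) = (\<Sum>j\<in>S. W k j * x j)"
    using assms(2,4) unfolding undirected_on_def by (auto intro!: sum.cong)
  have field: "local_field V W h x k = ?c k + (\<Sum>j\<in>S. W k j * x j)"
    unfolding local_field_def using assms(1,3) fin
    by (simp add: sum.subset_diff[of S V])
  show ?thesis
    unfolding partial_potential_def c_upd lin quadratic_form_fun_upd[of S k W, OF fin assms(2,5)] sym field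
    by (simp add: field_simps)
qed

lemma wsum_mono: "finite B \<Longrightarrow> A \<subseteq> B \<Longrightarrow> wsum W i A \<le> wsum W i B"
  unfolding wsum_def by (rule sum_mono2) auto

(* A stands for the nodes of U playing \<tau> in the gauged game; hm and hp absorb the external
   field together with the worst case of the influence from outside U. *)
definition threshold_flip ::
  "'v set \<Rightarrow> ('v \<Rightarrow> 'v \<Rightarrow> real) \<Rightarrow> ('v \<Rightarrow> real) \<Rightarrow> ('v \<Rightarrow> real) \<Rightarrow> 'v set \<Rightarrow> 'v set \<Rightarrow> bool" where
  "threshold_flip U W hm hp A B \<longleftrightarrow>
     (\<exists>i\<in>A. B = A - {i} \<and> wsum W i A + hp i < wsum W i (U - A)) \<or>
     (\<exists>i\<in>U - A. B = insert i A \<and> wsum W i (U - A) - hm i < wsum W i A)"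

lemma threshold_flip_fill:
  assumes "finite U" and indec: "indecomposable U W hm hp" and hm_hp: "\<forall>i\<in>U. hm i \<le> hp i"
    and "A \<subseteq> U" and "A \<noteq> {}" and "\<forall>i\<in>A. wsum W i (U - A) \<le> wsum W i A + hp i"
  shows "(threshold_flip U W hm hp)\<^sup>*\<^sup>* A U"
  using assms(4-6)
proof (induction "card (U - A)" arbitrary: A rule: less_induct)
  case less
  show ?case
  proof (cases "A = U")
    case True
    then show ?thesis by simp
  next
    case False
    \<comment> \<open>By the invariant no node of A may leave, so the cut (U - A, A) yields a node that may enter.\<close>
    then have "(U - A) \<union> A = U" and "(U - A) \<inter> A = {}" and "U - A \<noteq> {}"
      using less.prems(1) by auto
    then obtain i where
      "(i \<in> A \<and> wsum W i A + hp i < wsum W i (U - A)) \<or>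
       (i \<in> U - A \<and> wsum W i (U - A) - hm i < wsum W i A)"
      using indec less.prems(2) unfolding indecomposable_def by blast
    then have i: "i \<in> U - A" and grow: "wsum W i (U - A) - hm i < wsum W i A"
      using less.prems(3) by force+
    let ?A' = "insert i A"
    have step: "threshold_flip U W hm hp A ?A'"
      unfolding threshold_flip_def using i grow by blast
    have sub: "?A' \<subseteq> U"
      using less.prems(1) i by blast
    then have fin: "finite ?A'"
      using \<open>finite U\<close> by (rule finite_subset)
    have inv: "\<forall>j\<in>?A'. wsum W j (U - ?A') \<le> wsum W j ?A' + hp j"
    proof
      fix j assume "j \<in> ?A'"
      have "wsum W j (U - ?A') \<le> wsum W j (U - A)"
        using \<open>finite U\<close> by (intro wsum_mono) auto
      also have "\<dots> \<le> wsum W j A + hp j"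
      proof (cases "j = i")
        case True
        then show ?thesis using grow hm_hp i by force
      next
        case False
        then show ?thesis using \<open>j \<in> ?A'\<close> less.prems(3) by blast
      qed
      also have "\<dots> \<le> wsum W j ?A' + hp j"
        using wsum_mono[OF fin subset_insertI] by (rule add_right_mono)
      finally show "wsum W j (U - ?A') \<le> wsum W j ?A' + hp j" .
    qed
    have "U - ?A' = (U - A) - {i}"
      by blast
    then have "card (U - ?A') < card (U - A)"
      using \<open>finite U\<close> i by (simp only:) (intro card_Diff1_less; auto)
    then have "(threshold_flip U W hm hp)\<^sup>*\<^sup>* ?A' U"
      using sub inv by (intro less.hyps) auto
    with step show ?thesis
      by (rule converse_rtranclp_into_rtranclp)
  qed
qed

lemma threshold_flip_reaches_extreme:
  assumes "finite U" and "indecomposable U W hm hp" and "\<forall>i\<in>U. hm i \<le> hp i" and "A \<subseteq> U"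
  shows "\<exists>B. (threshold_flip U W hm hp)\<^sup>*\<^sup>* A B \<and> (B = {} \<or> B = U)"
  using assms(4)
proof (induction "card A" arbitrary: A rule: less_induct)
  case less
  show ?case
  proof (cases "\<exists>i\<in>A. wsum W i A + hp i < wsum W i (U - A)")
    case True
    then obtain i where i: "i \<in> A" and shrink: "wsum W i A + hp i < wsum W i (U - A)"
      by blast
    have step: "threshold_flip U W hm hp A (A - {i})"
      unfolding threshold_flip_def using i shrink by blast
    have "card (A - {i}) < card A"
      using \<open>finite U\<close> less.prems i by (meson card_Diff1_less finite_subset)
    then obtain B where "(threshold_flip U W hm hp)\<^sup>*\<^sup>* (A - {i}) B" and "B = {} \<or> B = U"
      using less.hyps less.prems by blast
    with step show ?thesis
      by (blast intro: converse_rtranclp_into_rtranclp)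
  next
    case False
    then have "(threshold_flip U W hm hp)\<^sup>*\<^sup>* A U" if "A \<noteq> {}"
      using threshold_flip_fill[OF assms(1-3) less.prems that] by (simp add: not_less)
    then show ?thesis
      by blast
  qed
qed

lemma wsum_nonneg: "wsum W i A \<ge> 0"
  unfolding wsum_def by (simp add: sum_nonneg)

lemma wsum_empty [simp]: "wsum W i {} = 0"
  unfolding wsum_def by simp

locale gauged_split =
  fixes V R S :: "'v set" and W :: "'v \<Rightarrow> 'v \<Rightarrow> real" and h tau :: "'v \<Rightarrow> real"
  assumes network: "network V W"
    and partition: "V = R \<union> S" "R \<inter> S = {}"
    and tau_sign: "\<forall>i\<in>R. tau i = -1 \<or> tau i = 1"
    and gauge: "gauge_unsigned R W tau"
begin

definition aligned :: "('v \<Rightarrow> real) \<Rightarrow> 'v set" where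
  "aligned x = {j \<in> R. x j = tau j}"

definition consensus :: "('v \<Rightarrow> real) \<Rightarrow> bool" where
  "consensus x \<longleftrightarrow> x \<in> profiles V \<and> (aligned x = {} \<or> aligned x = R)"

lemma finite_R: "finite R" and finite_S: "finite S"
  using network partition unfolding network_def by auto

lemma aligned_subset: "aligned x \<subseteq> R"
  unfolding aligned_def by blast

lemma not_aligned: "x \<in> profiles V \<Longrightarrow> j \<in> R - aligned x \<Longrightarrow> x j = - tau j"
  using tau_sign profiles_value[of x V j] partition unfolding aligned_def by force

lemma aligned_flip:
  assumes "x \<in> profiles V" and "i \<in> R"
  shows "aligned (x(i := - x i)) = (if i \<in> aligned x then aligned x - {i} else insert i (aligned x))"
  using assms tau_sign profiles_value[of x V i] partition unfolding aligned_def by force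

lemma aligned_fun_upd_other: "i \<notin> R \<Longrightarrow> aligned (x(i := b)) = aligned x"
  unfolding aligned_def by auto

lemma gauge_field_bound:
  assumes x: "x \<in> profiles V" and i: "i \<in> R"
  shows "\<bar>tau i * local_field V W h x i
           - (tau i * h i + wsum W i (aligned x) - wsum W i (R - aligned x))\<bar> \<le> wsum W i S"
proof -
  have term_R: "tau i * (W i j * x j) = (if j \<in> aligned x then \<bar>W i j\<bar> else - \<bar>W i j\<bar>)"
    if j: "j \<in> R" for j
  proof -
    have "tau i * W i j * tau j \<ge> 0"
      using gauge i j unfolding gauge_unsigned_def by blast
    moreover have "x j = tau j \<or> x j = - tau j" and "tau i = -1 \<or> tau i = 1" and "tau j = -1 \<or> tau j = 1"
      using not_aligned[OF x] j i tau_sign unfolding aligned_def by auto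
    ultimately show ?thesis
      unfolding aligned_def using j by (auto simp: abs_if)
  qed
  have "tau i * (\<Sum>j\<in>R. W i j * x j) = (\<Sum>j\<in>R. if j \<in> aligned x then \<bar>W i j\<bar> else - \<bar>W i j\<bar>)"
    unfolding sum_distrib_left by (rule sum.cong) (simp_all add: term_R)
  also have "\<dots> = wsum W i (aligned x) - wsum W i (R - aligned x)"
  proof -
    have "R \<inter> {j. j \<in> aligned x} = aligned x" and "R \<inter> - {j. j \<in> aligned x} = R - aligned x"
      using aligned_subset by auto
    then show ?thesis
      unfolding sum.If_cases[OF finite_R] wsum_def by (simp add: sum_negf)
  qed
  finally have "tau i * (\<Sum>j\<in>R. W i j * x j) = wsum W i (aligned x) - wsum W i (R - aligned x)" .
  moreover have "\<bar>tau i * (\<Sum>j\<in>S. W i j * x j)\<bar> \<le> wsum W i S"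
  proof -
    have "\<bar>tau i * (\<Sum>j\<in>S. W i j * x j)\<bar> = \<bar>\<Sum>j\<in>S. W i j * x j\<bar>"
      using tau_sign i by (auto simp: abs_mult)
    also have "\<dots> \<le> (\<Sum>j\<in>S. \<bar>W i j * x j\<bar>)"
      by (rule sum_abs)
    also have "\<dots> = wsum W i S"
      unfolding wsum_def using x partition
      by (intro sum.cong) (auto simp: abs_mult dest: profiles_value)
    finally show ?thesis .
  qed
  moreover have "local_field V W h x i = h i + (\<Sum>j\<in>R. W i j * x j) + (\<Sum>j\<in>S. W i j * x j)"
    unfolding local_field_def partition using finite_R finite_S partition(2)
    by (simp add: sum.union_disjoint)
  ultimately show ?thesis
    by (simp add: algebra_simps)
qed

lemma threshold_flip_br_step:
  assumes x: "x \<in> profiles V"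
    and "threshold_flip R W (\<lambda>i. tau i * h i - wsum W i S) (\<lambda>i. tau i * h i + wsum W i S) (aligned x) B"
  obtains y where "br_step V W h x y" and "y \<in> profiles V" and "aligned y = B"
proof -
  obtain i where i: "i \<in> R" and B: "B = aligned (x(i := - x i))"
    and field: "x i * local_field V W h x i < 0"
    using assms(2) unfolding threshold_flip_def
  proof (elim disjE bexE conjE)
    fix i assume i: "i \<in> aligned x" and B: "B = aligned x - {i}"
      and shrink: "wsum W i (aligned x) + (tau i * h i + wsum W i S) < wsum W i (R - aligned x)"
    have "i \<in> R" and "x i = tau i"
      using i unfolding aligned_def by blast+
    moreover have "tau i * local_field V W h x i < 0"
      using gauge_field_bound[OF x \<open>i \<in> R\<close>] shrink unfolding abs_le_iff by linarith
    moreover have "B = aligned (x(i := - x i))"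
      using aligned_flip[OF x \<open>i \<in> R\<close>] i B by simp
    ultimately show thesis
      using that by simp
  next
    fix i assume i: "i \<in> R - aligned x" and B: "B = insert i (aligned x)"
      and grow: "wsum W i (R - aligned x) - (tau i * h i - wsum W i S) < wsum W i (aligned x)"
    have "i \<in> R" and "x i = - tau i"
      using i not_aligned[OF x i] by blast+
    moreover have "tau i * local_field V W h x i > 0"
      using gauge_field_bound[OF x \<open>i \<in> R\<close>] grow unfolding abs_le_iff by linarith
    moreover have "B = aligned (x(i := - x i))"
      using aligned_flip[OF x \<open>i \<in> R\<close>] i B by simp
    ultimately show thesis
      using that by simp
  qed
  have "br_step V W h x (x(i := - x i))"
    using br_step_iff[OF network x] field i partition by fastforce
  moreover have "x(i := - x i) \<in> profiles V"
    using profiles_flip[OF x] i partition by blast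
  ultimately show ?thesis
    using that B by blast
qed

lemma threshold_flips_br_path:
  assumes "(threshold_flip R W (\<lambda>i. tau i * h i - wsum W i S) (\<lambda>i. tau i * h i + wsum W i S))\<^sup>*\<^sup>* (aligned x) B"
    and "x \<in> profiles V"
  shows "\<exists>z. br_path V W h x z \<and> z \<in> profiles V \<and> aligned z = B"
  using assms
proof (induction rule: rtranclp_induct)
  case base
  then show ?case
    unfolding br_path_def by blast
next
  case (step B C)
  then obtain z where "br_path V W h x z" and z: "z \<in> profiles V" and "aligned z = B"
    by blast
  moreover obtain y where "br_step V W h z y" and "y \<in> profiles V" and "aligned y = C"
    using threshold_flip_br_step[OF z] step.hyps(2) \<open>aligned z = B\<close> by blast
  ultimately show ?case
    unfolding br_path_def by (blast intro: rtranclp.rtrancl_into_rtrancl)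
qed

lemma reaches_consensus:
  assumes "indecomposable R W (\<lambda>i. tau i * h i - wsum W i S) (\<lambda>i. tau i * h i + wsum W i S)"
    and "x \<in> profiles V"
  obtains z where "br_path V W h x z" and "consensus z"
proof -
  have "\<forall>i\<in>R. tau i * h i - wsum W i S \<le> tau i * h i + wsum W i S"
    using wsum_nonneg[of W _ S] by auto
  then obtain B where "(threshold_flip R W (\<lambda>i. tau i * h i - wsum W i S) (\<lambda>i. tau i * h i + wsum W i S))\<^sup>*\<^sup>* (aligned x) B"
      and "B = {} \<or> B = R"
    using threshold_flip_reaches_extreme[OF finite_R assms(1) _ aligned_subset] by blast
  with threshold_flips_br_path[OF _ assms(2)] show ?thesis
    using that unfolding consensus_def by blast
qed

lemma consensus_locked:
  assumes strong: "\<forall>i\<in>R. wsum W i R - \<bar>h i\<bar> > wsum W i S"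
    and z: "consensus z" and i: "i \<in> R"
  shows "z i * local_field V W h z i > 0"
proof -
  have bound: "\<bar>tau i * local_field V W h z i
      - (tau i * h i + wsum W i (aligned z) - wsum W i (R - aligned z))\<bar> \<le> wsum W i S"
    using z i gauge_field_bound unfolding consensus_def by blast
  have "\<bar>tau i * h i\<bar> = \<bar>h i\<bar>" and "wsum W i R - \<bar>h i\<bar> > wsum W i S"
    using tau_sign strong i by (auto simp: abs_mult)
  moreover have "aligned z = R \<and> z i = tau i \<or> aligned z = {} \<and> z i = - tau i"
    using z i not_aligned unfolding consensus_def aligned_def by auto
  ultimately show ?thesis
    using bound unfolding abs_le_iff abs_if by (auto split: if_splits)
qed

lemma consensus_br_step:
  assumes "\<forall>i\<in>R. wsum W i R - \<bar>h i\<bar> > wsum W i S"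
    and "consensus z" and "br_step V W h z y"
  obtains k where "k \<in> S" and "y = z(k := - z k)" and "z k * local_field V W h z k \<le> 0"
    and "consensus y"
proof -
  obtain k where k: "k \<in> V" "y = z(k := - z k)" "z k * local_field V W h z k \<le> 0"
    using assms(2,3) br_step_iff[OF network] unfolding consensus_def by blast
  moreover have "k \<notin> R"
    using consensus_locked[OF assms(1,2)] k(3) by force
  moreover have "consensus y"
    using assms(2) k profiles_flip aligned_fun_upd_other[OF \<open>k \<notin> R\<close>]
    unfolding consensus_def by metis
  ultimately show ?thesis
    using that partition by blast
qed

lemma consensus_br_path:
  assumes "\<forall>i\<in>R. wsum W i R - \<bar>h i\<bar> > wsum W i S"
    and "br_path V W h z y" and "consensus z"
  shows "consensus y"
  using assms(2,3) unfolding br_path_def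
  by (induction rule: rtranclp_induct) (blast elim: consensus_br_step[OF assms(1)])+

lemma consensus_reaches_absorbing:
  assumes strong: "\<forall>i\<in>R. wsum W i R - \<bar>h i\<bar> > wsum W i S"
    and undirected: "undirected_on S W" and z: "consensus z"
  shows "\<exists>y. br_path V W h z y \<and> (\<forall>u. br_path V W h y u \<longrightarrow> u \<in> nash V W h)"
proof -
  let ?pot = "partial_potential V W h S"
  have flip_gain: "?pot (y(k := - y k)) - ?pot y = - 2 * (y k * local_field V W h y k)" if "k \<in> S" for y k
    using partial_potential_fun_upd[of V k S W h y "- y k"] network partition undirected that
    unfolding network_def by auto
  have "{y. (br_step V W h)\<^sup>*\<^sup>* z y} \<subseteq> profiles V"
    using br_path_profiles[OF network] z unfolding br_path_def consensus_def by blast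
  then have "finite {y. (br_step V W h)\<^sup>*\<^sup>* z y}"
    using finite_profiles network unfolding network_def by (blast intro: finite_subset)
  moreover have "?pot y \<le> ?pot u" if path: "(br_step V W h)\<^sup>*\<^sup>* z y" and step: "br_step V W h y u" for y u
  proof -
    have "consensus y"
      using consensus_br_path[OF strong _ z] path unfolding br_path_def by blast
    then obtain k where "k \<in> S" and "u = y(k := - y k)" and "y k * local_field V W h y k \<le> 0"
      using consensus_br_step[OF strong _ step] by blast
    then show ?thesis
      using flip_gain[of k y] by simp
  qed
  moreover have "\<exists>u. br_step V W h y u \<and> ?pot y < ?pot u"
    if path: "(br_step V W h)\<^sup>*\<^sup>* z y" and not_nash: "y \<notin> nash V W h" for y
  proof -
    have y: "consensus y"
      using consensus_br_path[OF strong _ z] path unfolding br_path_def by blast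
    then obtain k where "k \<in> V" and k: "y k * local_field V W h y k < 0"
      using not_nash nash_iff[OF network] unfolding consensus_def by force
    have "k \<in> S"
      using consensus_locked[OF strong y] k \<open>k \<in> V\<close> partition by force
    then have "?pot y < ?pot (y(k := - y k))"
      using flip_gain[of k y] k by linarith
    moreover have "br_step V W h y (y(k := - y k))"
      using br_step_iff[OF network] y k \<open>k \<in> V\<close> unfolding consensus_def by force
    ultimately show ?thesis
      by blast
  qed
  ultimately show ?thesis
    using potential_reaches_absorbing[of "br_step V W h" z ?pot "nash V W h"]
    unfolding br_path_def by blast
qed

end

theorem corollary4:
  fixes V R S :: "'v set" and W :: "'v \<Rightarrow> 'v \<Rightarrow> real" and h tau :: "'v \<Rightarrow> real"
  assumes "network V W"
    and "V = R \<union> S" and "R \<inter> S = {}"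
    and "structurally_balanced R W"
    and "undirected_on S W"
    and "\<forall>i\<in>R. tau i = -1 \<or> tau i = 1"
    and "gauge_unsigned R W tau"
    and "indecomposable R W (\<lambda>i. tau i * h i - wsum W i S) (\<lambda>i. tau i * h i + wsum W i S)"
    and "\<forall>i\<in>R. wsum W i R - \<bar>h i\<bar> > wsum W i S"
  shows "\<exists>X \<subseteq> nash V W h. globally_BR_stable V W h X"
proof -
  interpret gauged_split V R S W h tau
    using assms(1-3,6,7) by unfold_locales
  have "\<exists>y. br_path V W h x y \<and> (\<forall>u. br_path V W h y u \<longrightarrow> u \<in> nash V W h)"
    if x: "x \<in> profiles V" for x
  proof -
    obtain z where "br_path V W h x z" and "consensus z"
      using reaches_consensus[OF assms(8) x] .
    moreover obtain y where "br_path V W h z y" and "\<forall>u. br_path V W h y u \<longrightarrow> u \<in> nash V W h"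
      using consensus_reaches_absorbing[OF assms(9,5) \<open>consensus z\<close>] by blast
    ultimately show ?thesis
      unfolding br_path_def by (meson rtranclp_trans)
  qed
  then show ?thesis
    by (intro globally_BR_stable_if_absorbing_reachable) blast
qed

end
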